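(* Under the standing assumptions (A1)–(A4), let $\alpha>0$, $0<\gamma<\frac1{m-1}$, and consider the system (Algorithm B) $$\begin{aligned} \dot x&=\mathrm{Prox}_{F^m}\Big[x-\nabla F^0(x)+v+\gamma\textstyle\sum_{j=1}^{m-1}z^j\Big]-x,\\ \dot z^j&=\mathrm{Prox}_{F^j}[x-\gamma z^j]-x,\quad j=1,\dots,m-1,\\ \dot v&=-Y^{-1}(x-d)-\alpha L_{nq}v-w,\\ \dot w&=\alpha L_{nq}v,\\ \dot y&=-L_{nn}y, \end{aligned}$$ with state $(x,z,v,w,y)\in\mathbb{R}^{nq}\times\mathbb{R}^{(m-1)nq}\times\mathbb{R}^{nq}\times\mathbb{R}^{nq}\times\mathbb{R}^{n^2}$. If $(x^*,z^*,v^*,w^*,y^* )$ is an equilibrium of this system with $(\mathbf{1}_n\otimes I_q)^TH_{nq}w^*=\mathbf{0}_q$ and $y^*=\mathbf{1}_n\otimes h$, then $x^*$ is a solution of the problem $\min_x\sum_if_i(x_i)$ s.t. $\sum_ix_i=\sum_id_i$.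
   Context: Standing setup: $n$ agents; agent $i$ has state $x_i\in\mathbb{R}^q$, $x=(x_1^T,\dots,x_n^T)^T$. Given $d_i\in\mathbb{R}^q$, $d=(d_1^T,\dots,d_n^T)^T$. Integer $m\ge2$. $f_i=\sum_{j=0}^mf_i^j$; $F^j(x)=\sum_if_i^j(x_i)$; $\nabla F^0(x)=(\nabla f_1^0(x_1)^T,\dots,\nabla f_n^0(x_n)^T)^T$. Assumptions: (A1) each $f_i^0$ is twice continuously differentiable and strongly convex with a common constant $c>m-1$; (A2) each $f_i^j$, $j=1,\dots,m$, is proper closed convex; (A3) weighted directed strongly connected graph; (A4) feasibility. $\mathrm{prox}_f[\theta]=\arg\min_\delta\{f(\delta)+\frac12\|\delta-\theta\|^2\}$, $\mathrm{Prox}_{F^j}[\xi]=(\mathrm{prox}_{f_1^j}[\xi_1]^T,\dots,\mathrm{prox}_{f_n^j}[\xi_n]^T)^T$. Graph: adjacency $\mathcal{A}=[a_{ij}]$, Laplacian $L_n=D^{in}-\mathcal{A}$, $D^{in}=\mathrm{diag}(\sum_ja_{ij})$; $h$ positive left eigenvector with $h^TL_n=0$, $\sum_ih_i=1$; $H_{nq}=\mathrm{diag}(h_1,\dots,h_n)\otimes I_q$, $L_{nq}=L_n\otimes I_q$, $L_{nn}=L_n\otimes I_n$. The vector $y=(y_1^T,\dots,y_n^T)^T$ with $y_i=(y_i^1,\dots,y_i^n)^T\in\mathbb{R}^n$, and $Y=\mathrm{diag}(y_1^1,y_2^2,\dots,y_n^n)\otimes I_q$ (assumed invertible where used). *)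

theory Defs
  imports "HOL-Analysis.Analysis"
begin

definition proper_fun :: "('a \<Rightarrow> ereal) \<Rightarrow> bool" where
  "proper_fun f \<longleftrightarrow> (\<forall>x. f x \<noteq> -\<infinity>) \<and> (\<exists>x. f x \<noteq> \<infinity>)"

definition closed_fun :: "('a::topological_space \<Rightarrow> ereal) \<Rightarrow> bool" where
  "closed_fun f \<longleftrightarrow> closed {(x, t::real). f x \<le> ereal t}"

definition convex_efun :: "('a::real_vector \<Rightarrow> ereal) \<Rightarrow> bool" where
  "convex_efun f \<longleftrightarrow> (\<forall>x y (t::real). 0 \<le> t \<and> t \<le> 1 \<longrightarrow>
      f (t *\<^sub>R x + (1 - t) *\<^sub>R y) \<le> ereal t * f x + ereal (1 - t) * f y)"

definition proper_closed_convex :: "('a::real_normed_vector \<Rightarrow> ereal) \<Rightarrow> bool" where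
  "proper_closed_convex f \<longleftrightarrow> proper_fun f \<and> closed_fun f \<and> convex_efun f"

definition strongly_convex :: "real \<Rightarrow> ('a::real_normed_vector \<Rightarrow> real) \<Rightarrow> bool" where
  "strongly_convex c f \<longleftrightarrow> c > 0 \<and> (\<forall>x y (t::real). 0 \<le> t \<and> t \<le> 1 \<longrightarrow>
      f (t *\<^sub>R x + (1 - t) *\<^sub>R y) \<le> t * f x + (1 - t) * f y - c / 2 * t * (1 - t) * (norm (x - y))\<^sup>2)"

definition twice_cont_diff :: "('a::real_inner \<Rightarrow> real) \<Rightarrow> bool" where
  "twice_cont_diff f \<longleftrightarrow> (\<exists>g H. (\<forall>x. GDERIV f x :> g x) \<and> (\<forall>x. (g has_derivative H x) (at x))
       \<and> (\<forall>v. continuous_on UNIV (\<lambda>x. H x v)))"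

definition grad :: "('a::real_inner \<Rightarrow> real) \<Rightarrow> 'a \<Rightarrow> 'a" where
  "grad f x = (SOME D. GDERIV f x :> D)"

definition prox :: "('a::real_normed_vector \<Rightarrow> ereal) \<Rightarrow> 'a \<Rightarrow> 'a" where
  "prox f \<theta> = (THE \<delta>. \<forall>\<delta>'. f \<delta> + ereal ((norm (\<delta> - \<theta>))\<^sup>2 / 2) \<le> f \<delta>' + ereal ((norm (\<delta>' - \<theta>))\<^sup>2 / 2))"

definition laplacian :: "('n::finite \<Rightarrow> 'n \<Rightarrow> real) \<Rightarrow> 'n \<Rightarrow> 'n \<Rightarrow> real" where
  "laplacian a i j = (if i = j then (\<Sum>k\<in>UNIV. a i k) else 0) - a i j"

text \<open>Weighted digraph: edge j -> i iff a_ij > 0 (agent i receives from j). Strongly connected.\<close>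
definition strongly_connected_graph :: "('n::finite \<Rightarrow> 'n \<Rightarrow> real) \<Rightarrow> bool" where
  "strongly_connected_graph a \<longleftrightarrow> (\<forall>i j. a i j \<ge> 0) \<and>
     (\<forall>i j. (i, j) \<in> {(k, l). a l k > 0}\<^sup>*)"

text \<open>Block Laplacian action (L_n \<otimes> I) on stacked vectors.\<close>
definition lap_apply :: "('n::finite \<Rightarrow> 'n \<Rightarrow> real) \<Rightarrow> ('n \<Rightarrow> 'v::real_vector) \<Rightarrow> 'n \<Rightarrow> 'v" where
  "lap_apply a v i = (\<Sum>j\<in>UNIV. laplacian a i j *\<^sub>R v j)"

end

theory Submission
  imports Defs
begin

text \<open>The w-equation gives L v = 0, so by strong connectivity all v_i equal a common vector v;
  with y = h the v-equation reads x_i - d_i = -h_i w_i, and the weighted condition on w turns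
  this into the coupling constraint. A fixed point p = prox_g[\<theta>] means that \<theta> - p is a
  subgradient of g at p, so the x- and z-equations make v a subgradient of f_i at x_i for every
  agent. A subgradient common to all agents is a Lagrange multiplier for the coupling constraint,
  so x is optimal. The bounds on c and \<gamma> only matter for convergence of the dynamics, not for
  this characterisation of its equilibria.\<close>

definition is_subgradient :: "('a::real_inner \<Rightarrow> ereal) \<Rightarrow> 'a \<Rightarrow> 'a \<Rightarrow> bool" where
  "is_subgradient f p s \<longleftrightarrow> (\<exists>A. f p = ereal A \<and> (\<forall>y. ereal (A + inner s (y - p)) \<le> f y))"

lemma is_subgradient_zero: "is_subgradient (\<lambda>y. 0) p 0"
  unfolding is_subgradient_def by (auto intro!: exI[of _ 0] simp: zero_ereal_def)

lemma is_subgradient_add: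
  assumes "is_subgradient f p s" and "is_subgradient g p t"
  shows "is_subgradient (\<lambda>y. f y + g y) p (s + t)"
proof -
  obtain A B where A: "f p = ereal A" "\<And>y. ereal (A + inner s (y - p)) \<le> f y"
    and B: "g p = ereal B" "\<And>y. ereal (B + inner t (y - p)) \<le> g y"
    using assms unfolding is_subgradient_def by blast
  have "ereal (A + B + inner (s + t) (y - p))
      = ereal (A + inner s (y - p)) + ereal (B + inner t (y - p))" for y
    by (simp add: inner_add_left)
  then have "ereal (A + B + inner (s + t) (y - p)) \<le> f y + g y" for y
    using A B by (metis add_mono)
  then show ?thesis using A B unfolding is_subgradient_def by auto
qed

lemma is_subgradient_sum:
  assumes "finite J" and "\<forall>j\<in>J. is_subgradient (f j) p (s j)"
  shows "is_subgradient (\<lambda>y. \<Sum>j\<in>J. f j y) p (\<Sum>j\<in>J. s j)"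
  using assms by (induction J rule: finite_induct) (auto intro: is_subgradient_zero is_subgradient_add)

lemma sum_le_of_common_subgradient:
  fixes F :: "'i \<Rightarrow> 'a::real_inner \<Rightarrow> ereal"
  assumes "finite I" and sub: "\<forall>i\<in>I. is_subgradient (F i) (p i) v"
    and sums: "(\<Sum>i\<in>I. x i) = (\<Sum>i\<in>I. p i)"
  shows "(\<Sum>i\<in>I. F i (p i)) \<le> (\<Sum>i\<in>I. F i (x i))"
proof -
  obtain A where A: "\<And>i. i \<in> I \<Longrightarrow> F i (p i) = ereal (A i)"
    and tangent: "\<And>i y. i \<in> I \<Longrightarrow> ereal (A i + inner v (y - p i)) \<le> F i y"
    using sub unfolding is_subgradient_def by metis
  have "(\<Sum>i\<in>I. inner v (x i - p i)) = 0"
    using sums by (simp add: inner_sum_right[symmetric] sum_subtractf)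
  then have "(\<Sum>i\<in>I. F i (p i)) = (\<Sum>i\<in>I. ereal (A i + inner v (x i - p i)))"
    by (simp add: A sum.distrib)
  also have "\<dots> \<le> (\<Sum>i\<in>I. F i (x i))"
    by (rule sum_mono) (rule tangent)
  finally show ?thesis .
qed

lemma strongly_convex_imp_convex_on:
  fixes f :: "'a::real_normed_vector \<Rightarrow> real"
  assumes "strongly_convex c f"
  shows "convex_on UNIV f"
proof (rule convex_onI)
  fix t :: real and x y :: 'a assume t: "0 < t" "t < 1"
  have "0 \<le> c / 2 * t * (1 - t) * (norm (y - x))\<^sup>2"
    using assms t unfolding strongly_convex_def by simp
  moreover have "f (t *\<^sub>R y + (1 - t) *\<^sub>R x)
      \<le> t * f y + (1 - t) * f x - c / 2 * t * (1 - t) * (norm (y - x))\<^sup>2"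
    using assms t unfolding strongly_convex_def by simp
  ultimately show "f ((1 - t) *\<^sub>R x + t *\<^sub>R y) \<le> (1 - t) * f x + t * f y"
    by (simp add: add.commute)
qed simp

lemma convex_on_gderiv_above_tangent:
  fixes f :: "'a::real_inner \<Rightarrow> real"
  assumes cvx: "convex_on UNIV f" and g: "GDERIV f x :> g"
  shows "f x + inner g (y - x) \<le> f y"
proof -
  define \<phi> where "\<phi> t = f (x + t *\<^sub>R (y - x))" for t
  have "convex_on UNIV \<phi>"
  proof (rule convex_onI)
    fix t u v :: real
    have "x + ((1 - t) * u + t * v) *\<^sub>R (y - x)
        = (1 - t) *\<^sub>R (x + u *\<^sub>R (y - x)) + t *\<^sub>R (x + v *\<^sub>R (y - x))"
      by (simp add: algebra_simps)
    moreover assume "0 < t" "t < 1"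
    ultimately show "\<phi> ((1 - t) *\<^sub>R u + t *\<^sub>R v) \<le> (1 - t) * \<phi> u + t * \<phi> v"
      unfolding \<phi>_def using cvx by (simp add: convex_on_def)
  qed simp
  have "((\<lambda>t. x + t *\<^sub>R (y - x)) has_derivative (\<lambda>t. t *\<^sub>R (y - x))) (at 0)"
    by (auto intro!: derivative_eq_intros)
  moreover have "(f has_derivative (\<lambda>h. inner h g)) (at (x + 0 *\<^sub>R (y - x)))"
    using g unfolding gderiv_def by simp
  ultimately have "(\<phi> has_derivative (\<lambda>t. inner (t *\<^sub>R (y - x)) g)) (at 0)"
    unfolding \<phi>_def by (rule has_derivative_compose)
  then have "(\<phi> has_real_derivative inner g (y - x)) (at 0)"
    unfolding has_field_derivative_def by (simp add: inner_commute mult.commute[of _ "inner _ _"])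
  from convex_on_imp_above_tangent[OF \<open>convex_on UNIV \<phi>\<close> _ _ _ this, of 1]
  show ?thesis unfolding \<phi>_def by simp
qed

lemma twice_cont_diff_gderiv_grad:
  assumes "twice_cont_diff f"
  shows "GDERIV f x :> grad f x"
proof -
  from assms obtain g where "\<And>x. GDERIV f x :> g x" unfolding twice_cont_diff_def by blast
  then show ?thesis unfolding grad_def by (rule someI)
qed

lemma convex_on_gderiv_is_subgradient:
  fixes f :: "'a::real_inner \<Rightarrow> real"
  assumes "convex_on UNIV f" and "GDERIV f p :> g"
  shows "is_subgradient (\<lambda>y. ereal (f y)) p g"
  using convex_on_gderiv_above_tangent[OF assms] unfolding is_subgradient_def by auto

lemma convex_efun_imp_convex_epigraph:
  assumes "convex_efun f"
  shows "convex {(x, t::real). f x \<le> ereal t}"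
proof (rule convexI)
  fix p q :: "'a \<times> real" and u v :: real
  assume "p \<in> {(x, t). f x \<le> ereal t}" "q \<in> {(x, t). f x \<le> ereal t}"
    and uv: "0 \<le> u" "0 \<le> v" "u + v = 1"
  then obtain x s y r where pq: "p = (x, s)" "q = (y, r)" and "f x \<le> ereal s" "f y \<le> ereal r"
    by auto
  have "f (u *\<^sub>R x + v *\<^sub>R y) \<le> ereal u * f x + ereal v * f y"
    using assms uv unfolding convex_efun_def by (metis add_diff_cancel_left' le_add_same_cancel1)
  also have "\<dots> \<le> ereal u * ereal s + ereal v * ereal r"
    using uv \<open>f x \<le> ereal s\<close> \<open>f y \<le> ereal r\<close> by (intro add_mono ereal_mult_left_mono) auto
  finally show "u *\<^sub>R p + v *\<^sub>R q \<in> {(x, t). f x \<le> ereal t}"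
    using pq by simp
qed

text \<open>Separate a point strictly below the epigraph from the closed convex epigraph; the
  separating hyperplane cannot be vertical, so it is the graph of an affine minorant.\<close>

lemma proper_closed_convex_affine_minorant:
  fixes f :: "'a::euclidean_space \<Rightarrow> ereal"
  assumes "proper_closed_convex f"
  obtains a b where "\<And>x. ereal (inner a x + b) \<le> f x"
proof -
  let ?E = "{(x, t::real). f x \<le> ereal t}"
  have "convex ?E" "closed ?E" and no_minf: "\<And>x. f x \<noteq> -\<infinity>"
    using assms convex_efun_imp_convex_epigraph
    unfolding proper_closed_convex_def closed_fun_def proper_fun_def by blast+
  obtain x0 r0 where r0: "f x0 = ereal r0"
    using assms no_minf unfolding proper_closed_convex_def proper_fun_def by (metis ereal_cases)
  then have "(x0, r0 - 1) \<notin> ?E" by simp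
  from separating_hyperplane_closed_point[OF \<open>convex ?E\<close> \<open>closed ?E\<close> this]
  obtain a1 a2 b where below: "inner a1 x0 + a2 * (r0 - 1) < b"
    and above: "\<And>x t. f x \<le> ereal t \<Longrightarrow> b < inner a1 x + a2 * t"
    by (fastforce simp: inner_Pair)
  have "b < inner a1 x0 + a2 * r0" using above r0 by simp
  with below have a2: "a2 > 0" by (simp add: algebra_simps)
  have "ereal (inner (- a1 /\<^sub>R a2) x + b / a2) \<le> f x" for x
  proof (cases "f x")
    case (real r)
    then have "b < inner a1 x + a2 * r" using above by simp
    then show ?thesis using real a2 by (simp add: field_simps)
  qed (use no_minf in auto)
  then show ?thesis by (rule that)
qed

definition prox_objective :: "('a::real_normed_vector \<Rightarrow> ereal) \<Rightarrow> 'a \<Rightarrow> 'a \<Rightarrow> ereal" where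
  "prox_objective f \<theta> x = f x + ereal ((norm (x - \<theta>))\<^sup>2 / 2)"

lemma prox_objective_sublevel_closed:
  assumes "closed_fun f"
  shows "closed {x. prox_objective f \<theta> x \<le> ereal r}"
proof -
  have sublevel: "{x. prox_objective f \<theta> x \<le> ereal r}
     = (\<lambda>x. (x, r - (norm (x - \<theta>))\<^sup>2 / 2)) -` {(x, t). f x \<le> ereal t}"
    unfolding prox_objective_def by (rule set_eqI, rename_tac x, case_tac "f x") auto
  show ?thesis
    using assms unfolding sublevel closed_fun_def
    by (intro continuous_closed_vimage) (auto intro!: continuous_intros)
qed

lemma prox_objective_ge_affine:
  assumes "\<And>x. ereal (inner a x + b) \<le> f x"
  shows "ereal (b + inner a \<theta> - norm a * norm (x - \<theta>) + (norm (x - \<theta>))\<^sup>2 / 2)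
    \<le> prox_objective f \<theta> x"
proof -
  have "- inner a (x - \<theta>) \<le> norm a * norm (x - \<theta>)"
    by (metis Cauchy_Schwarz_ineq2 abs_le_iff)
  then have "b + inner a \<theta> - norm a * norm (x - \<theta>) \<le> inner a x + b"
    by (simp add: inner_diff_right)
  then have "ereal (b + inner a \<theta> - norm a * norm (x - \<theta>) + (norm (x - \<theta>))\<^sup>2 / 2)
      \<le> ereal (inner a x + b) + ereal ((norm (x - \<theta>))\<^sup>2 / 2)"
    by simp
  also have "\<dots> \<le> prox_objective f \<theta> x"
    unfolding prox_objective_def using assms by (rule add_right_mono)
  finally show ?thesis .
qed

lemma prox_objective_bounded_below:
  assumes "\<And>x. ereal (inner a x + b) \<le> f x"
  shows "ereal (b + inner a \<theta> - (norm a)\<^sup>2 / 2) \<le> prox_objective f \<theta> x"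
proof -
  have "0 \<le> (norm (x - \<theta>) - norm a)\<^sup>2" by simp
  then have "- (norm a)\<^sup>2 / 2 \<le> (norm (x - \<theta>))\<^sup>2 / 2 - norm a * norm (x - \<theta>)"
    by (simp add: power2_diff algebra_simps)
  then have "ereal (b + inner a \<theta> - (norm a)\<^sup>2 / 2)
      \<le> ereal (b + inner a \<theta> - norm a * norm (x - \<theta>) + (norm (x - \<theta>))\<^sup>2 / 2)"
    by simp
  also have "\<dots> \<le> prox_objective f \<theta> x"
    by (rule prox_objective_ge_affine[OF assms])
  finally show ?thesis .
qed

lemma le_of_square_le_affine:
  fixes u A C :: real
  assumes "0 \<le> u" "0 \<le> A" "u * u \<le> 2 * C + 2 * A * u"
  shows "u \<le> 1 + 2 * \<bar>C\<bar> + 2 * A"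
proof (cases "u \<le> 1")
  case False
  then have "2 * C \<le> 2 * \<bar>C\<bar> * u"
    using mult_left_mono[of 1 u "\<bar>C\<bar>"] by linarith
  then have "u * u \<le> (2 * \<bar>C\<bar> + 2 * A) * u"
    using assms(3) by (simp add: algebra_simps)
  then show ?thesis using False by simp
qed (use assms in simp)

lemma prox_objective_sublevel_bounded:
  assumes "\<And>x. ereal (inner a x + b) \<le> f x"
  shows "bounded {x. prox_objective f \<theta> x \<le> ereal r}"
proof -
  let ?C = "r - b - inner a \<theta>"
  have "norm (x - \<theta>) \<le> 1 + 2 * \<bar>?C\<bar> + 2 * norm a" if "prox_objective f \<theta> x \<le> ereal r" for x
  proof (rule le_of_square_le_affine)
    have "b + inner a \<theta> - norm a * norm (x - \<theta>) + (norm (x - \<theta>))\<^sup>2 / 2 \<le> r"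
      using prox_objective_ge_affine[OF assms, of \<theta> x] that by (metis ereal_less_eq(3) order_trans)
    then show "norm (x - \<theta>) * norm (x - \<theta>) \<le> 2 * ?C + 2 * norm a * norm (x - \<theta>)"
      by (simp add: power2_eq_square algebra_simps)
  qed auto
  then have "{x. prox_objective f \<theta> x \<le> ereal r} \<subseteq> cball \<theta> (1 + 2 * \<bar>?C\<bar> + 2 * norm a)"
    by (auto simp: dist_norm norm_minus_commute)
  then show ?thesis using bounded_cball bounded_subset by blast
qed

lemma prox_objective_has_minimizer:
  fixes f :: "'a::euclidean_space \<Rightarrow> ereal"
  assumes pcc: "proper_closed_convex f"
  obtains p where "\<And>y. prox_objective f \<theta> p \<le> prox_objective f \<theta> y"
proof -
  let ?\<psi> = "prox_objective f \<theta>"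
  obtain a b where ab: "\<And>x. ereal (inner a x + b) \<le> f x"
    using proper_closed_convex_affine_minorant[OF pcc] by blast
  obtain x0 where "f x0 \<noteq> \<infinity>" "f x0 \<noteq> -\<infinity>"
    using pcc unfolding proper_closed_convex_def proper_fun_def by blast
  then have "?\<psi> x0 \<noteq> \<infinity>" unfolding prox_objective_def by auto
  define \<mu> where "\<mu> = (INF x. ?\<psi> x)"
  have \<mu>_le: "\<mu> \<le> ?\<psi> y" for y unfolding \<mu>_def by (rule INF_lower) simp
  have "ereal (b + inner a \<theta> - (norm a)\<^sup>2 / 2) \<le> \<mu>"
    unfolding \<mu>_def by (rule INF_greatest) (rule prox_objective_bounded_below[OF ab])
  with \<mu>_le[of x0] \<open>?\<psi> x0 \<noteq> \<infinity>\<close> obtain m0 where m0: "\<mu> = ereal m0"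
    by (cases \<mu>) auto
  define K where "K n = {x. ?\<psi> x \<le> ereal (m0 + 1 / real (Suc n))}" for n
  have "compact (K n)" for n
    unfolding compact_eq_bounded_closed K_def using pcc
    by (auto simp: proper_closed_convex_def intro: prox_objective_sublevel_closed
        prox_objective_sublevel_bounded[OF ab])
  moreover have "K n \<noteq> {}" for n
  proof -
    have "\<mu> < ereal (m0 + 1 / real (Suc n))" using m0 by simp
    then obtain x where "?\<psi> x < ereal (m0 + 1 / real (Suc n))"
      unfolding \<mu>_def INF_less_iff by blast
    then show ?thesis unfolding K_def by (auto intro: less_imp_le)
  qed
  moreover have "K n \<subseteq> K k" if "k \<le> n" for k n
  proof -
    have "1 / real (Suc n) \<le> 1 / real (Suc k)"
      using that by (intro divide_left_mono) auto
    then show ?thesis unfolding K_def by (auto elim: order_trans)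
  qed
  ultimately have "\<Inter>(range K) \<noteq> {}" by (rule compact_nest)
  then obtain p where p: "\<And>n. p \<in> K n" by blast
  have "?\<psi> p \<le> \<mu>"
  proof (rule ereal_le_epsilon2)
    fix e :: real assume "0 < e"
    then obtain n where n: "inverse (real (Suc n)) < e" using reals_Archimedean by blast
    have "?\<psi> p \<le> ereal (m0 + 1 / real (Suc n))" using p[of n] unfolding K_def by simp
    also have "\<dots> \<le> \<mu> + ereal e" unfolding m0 using n by (simp add: inverse_eq_divide)
    finally show "?\<psi> p \<le> \<mu> + ereal e" .
  qed
  then show ?thesis using \<mu>_le that order_trans by blast
qed

lemma prox_objective_minimizer_finite:
  assumes "proper_fun f" and min: "\<And>y. prox_objective f \<theta> p \<le> prox_objective f \<theta> y"
  obtains A where "f p = ereal A"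
proof -
  obtain x0 where "f x0 \<noteq> \<infinity>" and no_minf: "\<And>x. f x \<noteq> -\<infinity>"
    using assms unfolding proper_fun_def by blast
  then have "prox_objective f \<theta> x0 \<noteq> \<infinity>" unfolding prox_objective_def by auto
  with min[of x0] have "f p \<noteq> \<infinity>" unfolding prox_objective_def by auto
  with no_minf[of p] show ?thesis using that by (cases "f p") auto
qed

lemma norm_midpoint_sq:
  fixes u v :: "'a::real_inner"
  shows "(norm ((1/2) *\<^sub>R u + (1/2) *\<^sub>R v))\<^sup>2 = (norm u)\<^sup>2 / 2 + (norm v)\<^sup>2 / 2 - (norm (u - v))\<^sup>2 / 4"
  unfolding power2_norm_eq_inner
  by (simp add: inner_add_left inner_add_right inner_diff_left inner_diff_right inner_commute
      algebra_simps) (simp add: field_simps)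

text \<open>The proximal objective is strongly convex: at the midpoint of two minimizers it drops
  by a quarter of their squared distance.\<close>

lemma prox_objective_minimizer_unique:
  fixes f :: "'a::real_inner \<Rightarrow> ereal"
  assumes cv: "convex_efun f" and fp: "f p = ereal A" and fq: "f q = ereal B"
    and min_p: "\<And>y. prox_objective f \<theta> p \<le> prox_objective f \<theta> y"
    and min_q: "\<And>y. prox_objective f \<theta> q \<le> prox_objective f \<theta> y"
  shows "p = q"
proof -
  define z where "z = (1/2::real) *\<^sub>R p + (1/2) *\<^sub>R q"
  have "f z \<le> ereal (1/2) * f p + ereal (1 - 1/2) * f q"
    using cv[unfolded convex_efun_def, rule_format, of "1/2" p q] unfolding z_def by simp
  also have "\<dots> = ereal (A/2 + B/2)" using fp fq by simp
  finally have fz: "f z \<le> ereal (A/2 + B/2)" .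
  have "prox_objective f \<theta> p \<le> prox_objective f \<theta> z" by (rule min_p)
  with fz fp obtain M where M: "f z = ereal M" "M \<le> A/2 + B/2"
    unfolding prox_objective_def by (cases "f z") auto
  have "z - \<theta> = (1/2) *\<^sub>R (p - \<theta>) + (1/2) *\<^sub>R (q - \<theta>)"
    unfolding z_def by (simp add: algebra_simps flip: scaleR_add_left)
  then have "(norm (z - \<theta>))\<^sup>2 = (norm (p - \<theta>))\<^sup>2 / 2 + (norm (q - \<theta>))\<^sup>2 / 2 - (norm (p - q))\<^sup>2 / 4"
    using norm_midpoint_sq[of "p - \<theta>" "q - \<theta>"] by simp
  moreover have "A + (norm (p - \<theta>))\<^sup>2 / 2 \<le> B + (norm (q - \<theta>))\<^sup>2 / 2"
    and "B + (norm (q - \<theta>))\<^sup>2 / 2 \<le> A + (norm (p - \<theta>))\<^sup>2 / 2"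
    and "A + (norm (p - \<theta>))\<^sup>2 / 2 \<le> M + (norm (z - \<theta>))\<^sup>2 / 2"
    using min_p[of q] min_q[of p] min_p[of z] fp fq M unfolding prox_objective_def by auto
  ultimately have "(norm (p - q))\<^sup>2 \<le> 0" using M by linarith
  then show ?thesis by simp
qed

lemma le_of_forall_le_add_mult:
  fixes A B C :: real
  assumes le: "\<And>t. 0 < t \<Longrightarrow> t \<le> 1 \<Longrightarrow> A \<le> B + t * C" and "0 \<le> C"
  shows "A \<le> B"
proof (rule field_le_epsilon)
  fix e :: real assume "0 < e"
  define t where "t = min 1 (e / (C + 1))"
  have "0 < t" "t \<le> 1" using \<open>0 < e\<close> \<open>0 \<le> C\<close> by (auto simp: t_def)
  have "t * C \<le> e / (C + 1) * C"
    unfolding t_def using \<open>0 \<le> C\<close> by (intro mult_right_mono) auto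
  also have "\<dots> \<le> e"
    using \<open>0 < e\<close> \<open>0 \<le> C\<close> by (simp add: field_simps)
  finally show "A \<le> B + e" using le[OF \<open>0 < t\<close> \<open>t \<le> 1\<close>] by linarith
qed

text \<open>First-order optimality: moving from the minimizer p towards y by a step t changes the
  proximal objective by t (f y - f p + (p - \<theta>) \<bullet> (y - p)) + O(t^2), which must be
  nonnegative.\<close>

lemma prox_objective_minimizer_subgradient:
  fixes f :: "'a::real_inner \<Rightarrow> ereal"
  assumes cv: "convex_efun f" and fp: "f p = ereal A"
    and min: "\<And>y. prox_objective f \<theta> p \<le> prox_objective f \<theta> y"
  shows "is_subgradient f p (\<theta> - p)"
proof -
  have "ereal (A + inner (\<theta> - p) (y - p)) \<le> f y" for y
  proof (cases "f y")
    case (real Y)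
    have "A \<le> Y + inner (p - \<theta>) (y - p) + t * ((norm (y - p))\<^sup>2 / 2)" if t: "0 < t" "t \<le> 1" for t
    proof -
      define z where "z = t *\<^sub>R y + (1 - t) *\<^sub>R p"
      have "f z \<le> ereal t * f y + ereal (1 - t) * f p"
        using cv t unfolding convex_efun_def z_def by simp
      also have "\<dots> = ereal (t * Y + (1 - t) * A)" using fp real by simp
      finally have fz: "f z \<le> ereal (t * Y + (1 - t) * A)" .
      have "prox_objective f \<theta> p \<le> prox_objective f \<theta> z" by (rule min)
      with fz fp obtain M where M: "M \<le> t * Y + (1 - t) * A"
        and "A + (norm (p - \<theta>))\<^sup>2 / 2 \<le> M + (norm (z - \<theta>))\<^sup>2 / 2"
        unfolding prox_objective_def by (cases "f z") auto
      moreover have "z - \<theta> = (p - \<theta>) + t *\<^sub>R (y - p)"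
        unfolding z_def by (simp add: algebra_simps)
      then have "(norm (z - \<theta>))\<^sup>2
          = (norm (p - \<theta>))\<^sup>2 + 2 * t * inner (p - \<theta>) (y - p) + t\<^sup>2 * (norm (y - p))\<^sup>2"
        unfolding power2_norm_eq_inner by (simp only:)
          (simp add: inner_add_left inner_add_right inner_commute power2_eq_square algebra_simps)
      ultimately have "t * A \<le> t * (Y + inner (p - \<theta>) (y - p) + t * ((norm (y - p))\<^sup>2 / 2))"
        by (simp add: algebra_simps power2_eq_square)
      then show ?thesis using t by simp
    qed
    then have "A \<le> Y + inner (p - \<theta>) (y - p)"
      by (rule le_of_forall_le_add_mult) auto
    then show ?thesis using real by (simp add: inner_diff_left inner_diff_right)
  next
    case MInf
    with min[of y] fp show ?thesis unfolding prox_objective_def by simp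
  qed simp
  with fp show ?thesis unfolding is_subgradient_def by blast
qed

lemma prox_minimizes:
  fixes f :: "'a::euclidean_space \<Rightarrow> ereal"
  assumes pcc: "proper_closed_convex f"
  shows "prox_objective f \<theta> (prox f \<theta>) \<le> prox_objective f \<theta> y"
proof -
  let ?min = "\<lambda>p. \<forall>y. prox_objective f \<theta> p \<le> prox_objective f \<theta> y"
  have proper: "proper_fun f" and cv: "convex_efun f"
    using pcc unfolding proper_closed_convex_def by auto
  obtain p where p: "?min p" using prox_objective_has_minimizer[OF pcc] by blast
  have "\<exists>!p. ?min p"
  proof (rule ex1I[of _ p])
    fix q assume q: "?min q"
    obtain A B where "f q = ereal A" "f p = ereal B"
      using prox_objective_minimizer_finite[OF proper] p q by metis
    then show "q = p"
      using prox_objective_minimizer_unique[OF cv] p q by blast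
  qed (use p in blast)
  then have "?min (prox f \<theta>)"
    unfolding prox_def prox_objective_def[abs_def] by (rule theI')
  then show ?thesis by blast
qed

lemma prox_is_subgradient:
  fixes f :: "'a::euclidean_space \<Rightarrow> ereal"
  assumes pcc: "proper_closed_convex f"
  shows "is_subgradient f (prox f \<theta>) (\<theta> - prox f \<theta>)"
proof -
  have proper: "proper_fun f" and cv: "convex_efun f"
    using pcc unfolding proper_closed_convex_def by auto
  obtain A where "f (prox f \<theta>) = ereal A"
    using prox_objective_minimizer_finite[OF proper prox_minimizes[OF pcc]] .
  then show ?thesis
    using prox_objective_minimizer_subgradient[OF cv _ prox_minimizes[OF pcc]] by blast
qed

text \<open>Each prox fixed point yields a subgradient of its summand at p; the \<gamma>-terms cancel in
  their sum, leaving v minus the gradient of the smooth part.\<close>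

lemma prox_splitting_equilibrium_subgradient:
  fixes f0 :: "'a::euclidean_space \<Rightarrow> real" and f :: "nat \<Rightarrow> 'a \<Rightarrow> ereal"
  assumes "1 \<le> m" and cvx: "convex_on UNIV f0" and g: "GDERIV f0 p :> g"
    and pcc: "\<forall>j\<in>{1..m}. proper_closed_convex (f j)"
    and eq_x: "prox (f m) (p - g + v + \<gamma> *\<^sub>R (\<Sum>j\<in>{1..m-1}. z j)) = p"
    and eq_z: "\<forall>j\<in>{1..m-1}. prox (f j) (p - \<gamma> *\<^sub>R z j) = p"
  shows "is_subgradient (\<lambda>y. ereal (f0 y) + (\<Sum>j\<in>{1..m}. f j y)) p v"
proof -
  define s where "s j = (if j = m then v - g + \<gamma> *\<^sub>R (\<Sum>j\<in>{1..m-1}. z j) else - \<gamma> *\<^sub>R z j)"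
    for j
  have "is_subgradient (f j) p (s j)" if j: "j \<in> {1..m}" for j
  proof (cases "j = m")
    case True
    then show ?thesis
      using prox_is_subgradient[of "f m" "p - g + v + \<gamma> *\<^sub>R (\<Sum>j\<in>{1..m-1}. z j)"] pcc j eq_x
      by (simp add: s_def)
  next
    case False
    with j have "j \<in> {1..m-1}" by auto
    then show ?thesis
      using prox_is_subgradient[of "f j" "p - \<gamma> *\<^sub>R z j"] pcc j eq_z False by (simp add: s_def)
  qed
  then have "is_subgradient (\<lambda>y. \<Sum>j\<in>{1..m}. f j y) p (\<Sum>j\<in>{1..m}. s j)"
    by (intro is_subgradient_sum) auto
  moreover have "(\<Sum>j\<in>{1..m}. s j) = v - g"
  proof -
    have "{1..m} = insert m {1..m-1}" "m \<notin> {1..m-1}" using \<open>1 \<le> m\<close> by auto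
    moreover have "(\<Sum>j\<in>{1..m-1}. s j) = (\<Sum>j\<in>{1..m-1}. - \<gamma> *\<^sub>R z j)"
      by (rule sum.cong) (auto simp: s_def)
    ultimately show ?thesis by (simp add: s_def scaleR_sum_right sum_negf)
  qed
  ultimately show ?thesis
    using is_subgradient_add[OF convex_on_gderiv_is_subgradient[OF cvx g]] by fastforce
qed

lemma laplacian_sum_eq:
  "(\<Sum>j\<in>UNIV. laplacian a i j * u j) = (\<Sum>j\<in>UNIV. a i j * (u i - u j))"
  unfolding laplacian_def
  by (simp add: left_diff_distrib right_diff_distrib sum_subtractf sum_distrib_right
      if_distrib[of "\<lambda>x. x * _"] cong: if_cong)

text \<open>A maximum of u propagates along every edge, so by strong connectivity it is attained
  everywhere.\<close>

lemma laplacian_kernel_constant: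
  fixes a :: "'n::finite \<Rightarrow> 'n \<Rightarrow> real"
  assumes sc: "strongly_connected_graph a" and L: "\<And>i. (\<Sum>j\<in>UNIV. laplacian a i j * u j) = 0"
  shows "u i = Max (range u)"
proof -
  define M where "M = Max (range u)"
  have nn: "\<And>i j. a i j \<ge> 0" and conn: "\<And>i j. (i, j) \<in> {(k, l). a l k > 0}\<^sup>*"
    using sc unfolding strongly_connected_graph_def by auto
  have le_M: "u k \<le> M" for k unfolding M_def by (rule Max_ge) auto
  have spread: "u k = M" if "u l = M" "a l k > 0" for l k
  proof -
    have "(\<Sum>j\<in>UNIV. a l j * (M - u j)) = 0" using L[of l] laplacian_sum_eq[of a l u] that by simp
    moreover have "\<forall>j\<in>UNIV. 0 \<le> a l j * (M - u j)" using nn le_M by simp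
    ultimately have "a l k * (M - u k) = 0" by (simp add: sum_nonneg_eq_0_iff)
    then show ?thesis using that by simp
  qed
  have "M \<in> range u" unfolding M_def by (rule Max_in) auto
  then obtain j0 where j0: "u j0 = M" by auto
  have "u j = M \<longrightarrow> u i = M" if "(i, j) \<in> {(k, l). a l k > 0}\<^sup>*" for i j
    using that
  proof (induction rule: converse_rtrancl_induct)
    case (step y z)
    then show ?case using spread by blast
  qed simp
  then show ?thesis using conn[of i j0] j0 unfolding M_def by blast
qed

lemma lap_apply_eq_0_imp_constant:
  fixes v :: "'n::finite \<Rightarrow> real^'q"
  assumes sc: "strongly_connected_graph a" and L: "\<And>i. lap_apply a v i = 0"
  obtains c where "\<And>i. v i = c"
proof
  fix i
  have "v i $ k = Max (range (\<lambda>j. v j $ k))" for k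
  proof (rule laplacian_kernel_constant[OF sc])
    fix i
    show "(\<Sum>j\<in>UNIV. laplacian a i j * (v j $ k)) = 0"
      using L[of i] unfolding lap_apply_def vec_eq_iff by simp
  qed
  then show "v i = (\<chi> k. Max (range (\<lambda>j. v j $ k)))"
    by (simp add: vec_eq_iff)
qed

theorem lemma5:
  fixes m :: nat and c \<alpha> \<gamma> :: real
    and f0 :: "'n::finite \<Rightarrow> real^'q \<Rightarrow> real"
    and f :: "nat \<Rightarrow> 'n \<Rightarrow> real^'q \<Rightarrow> ereal"
    and a :: "'n \<Rightarrow> 'n \<Rightarrow> real" and h :: "'n \<Rightarrow> real"
    and d :: "'n \<Rightarrow> real^'q"
    and xs :: "'n \<Rightarrow> real^'q" and zs :: "nat \<Rightarrow> 'n \<Rightarrow> real^'q"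
    and vs ws :: "'n \<Rightarrow> real^'q" and ys :: "'n \<Rightarrow> 'n \<Rightarrow> real"
  assumes m2: "m \<ge> 2"
    and A1: "\<forall>i. twice_cont_diff (f0 i) \<and> strongly_convex c (f0 i)" and c_gt: "c > real m - 1"
    and A2: "\<forall>j\<in>{1..m}. \<forall>i. proper_closed_convex (f j i)"
    and A3: "strongly_connected_graph a"
    and A4: "\<exists>x::'n \<Rightarrow> real^'q. (\<Sum>i\<in>UNIV. x i) = (\<Sum>i\<in>UNIV. d i) \<and>
               (\<forall>i. (\<Sum>j\<in>{1..m}. f j i (x i)) < \<infinity>)"
    and h_pos: "\<forall>i. h i > 0"
    and h_left: "\<forall>j. (\<Sum>i\<in>UNIV. h i * laplacian a i j) = 0"
    and h_sum: "(\<Sum>i\<in>UNIV. h i) = 1"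
    and alpha: "\<alpha> > 0"
    and gamma: "0 < \<gamma>" "\<gamma> < 1 / (real m - 1)"
    and eq_x: "\<forall>i. prox (f m i) (xs i - grad (f0 i) (xs i) + vs i + \<gamma> *\<^sub>R (\<Sum>j\<in>{1..m-1}. zs j i)) - xs i = 0"
    and eq_z: "\<forall>j\<in>{1..m-1}. \<forall>i. prox (f j i) (xs i - \<gamma> *\<^sub>R zs j i) - xs i = 0"
    and eq_v: "\<forall>i. - ((1 / ys i i) *\<^sub>R (xs i - d i)) - \<alpha> *\<^sub>R lap_apply a vs i - ws i = 0"
    and eq_w: "\<forall>i. \<alpha> *\<^sub>R lap_apply a vs i = 0"
    and eq_y: "\<forall>i k. - (\<Sum>j\<in>UNIV. laplacian a i j * ys j k) = 0"
    and w_cond: "(\<Sum>i\<in>UNIV. h i *\<^sub>R ws i) = 0"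
    and y_cond: "\<forall>i. ys i = h"
  shows "(\<Sum>i\<in>UNIV. xs i) = (\<Sum>i\<in>UNIV. d i) \<and>
         (\<forall>x::'n \<Rightarrow> real^'q. (\<Sum>i\<in>UNIV. x i) = (\<Sum>i\<in>UNIV. d i) \<longrightarrow>
            (\<Sum>i\<in>UNIV. ereal (f0 i (xs i)) + (\<Sum>j\<in>{1..m}. f j i (xs i)))
              \<le> (\<Sum>i\<in>UNIV. ereal (f0 i (x i)) + (\<Sum>j\<in>{1..m}. f j i (x i))))"
proof -
  have Lv: "\<And>i. lap_apply a vs i = 0" using eq_w alpha by simp
  then obtain v where vs: "\<And>i. vs i = v" using lap_apply_eq_0_imp_constant[OF A3] by blast
  have "xs i - d i = - (h i *\<^sub>R ws i)" for i
  proof -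
    have "(1 / h i) *\<^sub>R (xs i - d i) = - ws i" using eq_v Lv y_cond by (simp add: algebra_simps)
    then have "h i *\<^sub>R ((1 / h i) *\<^sub>R (xs i - d i)) = - (h i *\<^sub>R ws i)" by simp
    then show ?thesis using h_pos[rule_format, of i] by simp
  qed
  then have "(\<Sum>i\<in>UNIV. xs i) - (\<Sum>i\<in>UNIV. d i) = - (\<Sum>i\<in>UNIV. h i *\<^sub>R ws i)"
    by (simp add: sum_negf flip: sum_subtractf)
  with w_cond have sum_xs: "(\<Sum>i\<in>UNIV. xs i) = (\<Sum>i\<in>UNIV. d i)" by simp
  have subgradient: "is_subgradient (\<lambda>y. ereal (f0 i y) + (\<Sum>j\<in>{1..m}. f j i y)) (xs i) v" for i
    using A1 A2 eq_x eq_z m2 vs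
    by (intro prox_splitting_equilibrium_subgradient[where g = "grad (f0 i) (xs i)"])
      (auto intro: strongly_convex_imp_convex_on twice_cont_diff_gderiv_grad)
  show ?thesis
  proof (intro conjI allI impI)
    fix x :: "'n \<Rightarrow> real^'q" assume "(\<Sum>i\<in>UNIV. x i) = (\<Sum>i\<in>UNIV. d i)"
    with sum_xs show "(\<Sum>i\<in>UNIV. ereal (f0 i (xs i)) + (\<Sum>j\<in>{1..m}. f j i (xs i)))
        \<le> (\<Sum>i\<in>UNIV. ereal (f0 i (x i)) + (\<Sum>j\<in>{1..m}. f j i (x i)))"
      using subgradient by (intro sum_le_of_common_subgradient[where v = v]) auto
  qed (rule sum_xs)
qed

end
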